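(* Let $n\ge 2$, $\mathcal{O}\in\mathcal{C}_c^{(n)}$, $\nu\in(0,1]$, and $\mathcal{J}\in\mathbf{J}_{\mathcal{O}}^{\nu}$. Then there is a constant $\mu_{n,\nu}$ depending only on $n$ and $\nu$ such that $\|\mathcal{J}\|_2\le\mu_{n,\nu}$, $0\le\mu_{n,\nu}<1$.
   Context: $\imath=\sqrt{-1}$. For $1\le i<j\le n$ and real $\phi,\alpha$, $R(i,j,\phi,\alpha)$ is the $n\times n$ matrix equal to $I_n$ except for entries $(i,i)=(j,j)=\cos\phi$, $(i,j)=-e^{\imath\alpha}\sin\phi$, $(j,i)=e^{-\imath\alpha}\sin\phi$. Let $N=n(n-1)/2$. For $A=(a_{st})\in\mathbb{C}^{n\times n}$ let $c_t=(a_{1t},\dots,a_{t-1,t})^T$, $r_s=(a_{s1},\dots,a_{s,s-1})$ ($2\le s,t\le n$) and $\mathrm{ve}(A)=[c_2^T,\dots,c_n^T,r_2,\dots,r_n]^T\in\mathbb{C}^{2N}$. Let $\nu_{ij}$ be the linear map on $\mathbb{C}^{n\times n}$ setting entries $(i,j),(j,i)$ to zero. For $U=R(i,j,\phi,\alpha)$ the Jacobi annihilator $\mathcal{R}_{ij}(U)$ is the $2N\times 2N$ matrix with $\mathcal{R}_{ij}(U)\mathrm{ve}(A)=\mathrm{ve}(\nu_{ij}(U^*AU))$ for all $A$. For $\nu\in[0,1]$, $\mathbf{R}_{ij}^{\nu}=\{\mathcal{R}_{ij}(U): U=R(i,j,\phi,\alpha),\ |\cos\phi|\ge\nu\}$.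 Let $\mathcal{P}_n=\{(r,s):1\le r<s\le n\}$. For an ordering $\mathcal{O}=(i_0,j_0),\dots,(i_{N-1},j_{N-1})$ of $\mathcal{P}_n$ (each pair exactly once), the class of Jacobi operators is $\mathbf{J}_{\mathcal{O}}^{\nu}=\{\mathcal{R}_{i_{N-1}j_{N-1}}\cdots\mathcal{R}_{i_1j_1}\mathcal{R}_{i_0j_0}: \mathcal{R}_{i_kj_k}\in\mathbf{R}_{i_kj_k}^{\nu},\ 0\le k\le N-1\}$. $\|\cdot\|_2$ is the spectral norm. $\mathcal{C}_c^{(n)}$ is the set of orderings of the form $(1,2),(\tau_3(1),3),(\tau_3(2),3),\dots,(\tau_n(1),n),\dots,(\tau_n(n-1),n)$, each $\tau_j$ a permutation of $\{1,\dots,j-1\}$, $3\le j\le n$. *)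

theory Defs
  imports Complex_Main "Jordan_Normal_Form.Schur_Decomposition"
begin

text \<open>Indices of pairs (i,j) are 1-based as in the paper; matrix entry (s,t) of the paper
  is entry (s-1,t-1) of a JNF matrix.\<close>

definition Nn :: "nat \<Rightarrow> nat" where "Nn n = n * (n - 1) div 2"

definition rot :: "nat \<Rightarrow> nat \<Rightarrow> nat \<Rightarrow> real \<Rightarrow> real \<Rightarrow> complex mat" where
  "rot n i j \<phi> \<alpha> = mat n n (\<lambda>(p,q).
     if p = q then (if p = i - 1 \<or> p = j - 1 then complex_of_real (cos \<phi>) else 1)
     else if p = i - 1 \<and> q = j - 1 then - exp (\<i> * complex_of_real \<alpha>) * complex_of_real (sin \<phi>)
     else if p = j - 1 \<and> q = i - 1 then exp (- \<i> * complex_of_real \<alpha>) * complex_of_real (sin \<phi>)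
     else 0)"

definition ve :: "nat \<Rightarrow> complex mat \<Rightarrow> complex vec" where
  "ve n A = vec_of_list
     (concat (map (\<lambda>t. map (\<lambda>s. A $$ (s - 1, t - 1)) [1..<t]) [2..<n+1]) @
      concat (map (\<lambda>s. map (\<lambda>t. A $$ (s - 1, t - 1)) [1..<s]) [2..<n+1]))"

definition nu :: "nat \<Rightarrow> nat \<Rightarrow> nat \<Rightarrow> complex mat \<Rightarrow> complex mat" where
  "nu n i j A = mat n n (\<lambda>(p,q).
     if (p = i - 1 \<and> q = j - 1) \<or> (p = j - 1 \<and> q = i - 1) then 0 else A $$ (p,q))"

definition is_annihilator :: "nat \<Rightarrow> nat \<Rightarrow> nat \<Rightarrow> complex mat \<Rightarrow> complex mat \<Rightarrow> bool" where
  "is_annihilator n i j U R \<longleftrightarrow>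
     R \<in> carrier_mat (2 * Nn n) (2 * Nn n) \<and>
     (\<forall>A \<in> carrier_mat n n. R *\<^sub>v ve n A = ve n (nu n i j (mat_adjoint U * A * U)))"

definition ann_set :: "nat \<Rightarrow> real \<Rightarrow> nat \<times> nat \<Rightarrow> complex mat set" where
  "ann_set n \<nu> ij = {R. \<exists>\<phi> \<alpha>. \<bar>cos \<phi>\<bar> \<ge> \<nu> \<and>
      is_annihilator n (fst ij) (snd ij) (rot n (fst ij) (snd ij) \<phi> \<alpha>) R}"

text \<open>Class of Jacobi operators J_O^nu for an ordering O = [(i_0,j_0),...,(i_{N-1},j_{N-1})]:
  products R_{N-1} ... R_1 R_0.\<close>
fun jacobi_class :: "nat \<Rightarrow> real \<Rightarrow> (nat \<times> nat) list \<Rightarrow> complex mat set" where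
  "jacobi_class n \<nu> [] = {1\<^sub>m (2 * Nn n)}"
| "jacobi_class n \<nu> (p # ps) = {J * R | J R. J \<in> jacobi_class n \<nu> ps \<and> R \<in> ann_set n \<nu> p}"

definition Cc :: "nat \<Rightarrow> (nat \<times> nat) list set" where
  "Cc n = {ord. \<exists>\<tau> :: nat \<Rightarrow> nat \<Rightarrow> nat.
      (\<forall>j \<in> {2..n}. bij_betw (\<tau> j) {1..<j} {1..<j}) \<and>
      ord = concat (map (\<lambda>j. map (\<lambda>k. (\<tau> j k, j)) [1..<j]) [2..<n+1])}"

definition vnorm2 :: "complex vec \<Rightarrow> real" where
  "vnorm2 x = sqrt (\<Sum>i<dim_vec x. (cmod (x $ i))\<^sup>2)"

definition spec_norm :: "complex mat \<Rightarrow> real" where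
  "spec_norm M = Sup {vnorm2 (M *\<^sub>v x) | x. x \<in> carrier_vec (dim_col M) \<and> vnorm2 x \<le> 1}"

end

theory Submission
  imports Defs
begin

text \<open>
  Every vector of length 2N is ve(A) for some n x n matrix A, and the Euclidean norm of ve(A) is
  off(A), the Frobenius norm of the off-diagonal part of A. A Jacobi operator maps ve(A) to ve(F),
  where F arises from A by the N Jacobi steps A |-> nu_ij(U^* A U). A step preserves the
  off-diagonal norm except for the pivot pair it annihilates, so off(A)^2 = off(F)^2 + L with L the
  total squared mass annihilated. It therefore suffices to show off(F)^2 <= K L for a constant
  K = K(n, nu), since then off(F)^2 <= K/(1+K) off(A)^2.

  For a column ordering this is proved column by column. Suppose the leading c x c block is bounded
  by B, a multiple of sqrt L. Just before the pivot (k, c+1) is annihilated, the entries (k, c+1)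
  and (c+1, k), of modulus at most sqrt L, equal the corresponding entries at the start of the sweep
  of column c+1 times a product of at most c cosines, up to an error c B. As every |cos phi| >= nu,
  the new column was bounded by (sqrt L + c B) / nu^c, and each of the c steps of the sweep at most
  doubles the bound on the leading (c+1) x (c+1) block.
\<close>

section \<open>Rotations and a single Jacobi step\<close>

lemma mat_adjoint_carrier [simp]: "A \<in> carrier_mat m n \<Longrightarrow> mat_adjoint A \<in> carrier_mat n m"
  by (auto simp: mat_adjoint_def mat_of_rows_def)

lemma mat_adjoint_index:
  "A \<in> carrier_mat m n \<Longrightarrow> s < n \<Longrightarrow> k < m \<Longrightarrow> mat_adjoint A $$ (s,k) = cnj (A $$ (k,s))"
  by (auto simp: mat_adjoint_def mat_of_rows_def)

lemma rot_carrier [simp]: "rot n i j \<phi> \<alpha> \<in> carrier_mat n n"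
  by (simp add: rot_def)

lemma rot_index_off_pivots:
  assumes "k < n" "t < n" "k \<notin> {p, q} \<or> t \<notin> {p, q}"
  shows "rot n (Suc p) (Suc q) \<phi> \<alpha> $$ (k,t) = of_bool (k = t)"
proof -
  have "rot n (Suc p) (Suc q) \<phi> \<alpha> $$ (k,t) = (if k = t then 1 else 0)"
    using assms by (elim disjE) (simp_all add: rot_def)
  then show ?thesis
    by simp
qed

lemma mult_rot_index:
  fixes \<phi> \<alpha> :: real
  assumes M: "M \<in> carrier_mat m n" and s: "s < m" and t: "t < n"
    and pivots: "p < n" "q < n" "p \<noteq> q"
  defines "U \<equiv> rot n (Suc p) (Suc q) \<phi> \<alpha>"
  shows "(M * U) $$ (s,t) =
    (if t \<in> {p, q} then M $$ (s,p) * U $$ (p,t) + M $$ (s,q) * U $$ (q,t) else M $$ (s,t))"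
proof -
  have "(M * U) $$ (s,t) = (\<Sum>k\<in>{0..<n}. M $$ (s,k) * U $$ (k,t))"
    using carrier_matD[OF M] carrier_matD[OF rot_carrier] s t by (simp add: U_def scalar_prod_def)
  also have "\<dots> = (\<Sum>k\<in>(if t \<in> {p, q} then {p, q} else {t}). M $$ (s,k) * U $$ (k,t))"
    using t pivots by (intro sum.mono_neutral_right) (auto simp: U_def rot_index_off_pivots)
  finally show ?thesis
    using t pivots by (auto simp: U_def rot_index_off_pivots)
qed

lemma adjoint_rot_mult_index:
  fixes \<phi> \<alpha> :: real
  assumes M: "M \<in> carrier_mat n m" and s: "s < n" and t: "t < m"
    and pivots: "p < n" "q < n" "p \<noteq> q"
  defines "U \<equiv> rot n (Suc p) (Suc q) \<phi> \<alpha>"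
  shows "(mat_adjoint U * M) $$ (s,t) = (if s \<in> {p, q}
    then cnj (U $$ (p,s)) * M $$ (p,t) + cnj (U $$ (q,s)) * M $$ (q,t) else M $$ (s,t))"
proof -
  have "(mat_adjoint U * M) $$ (s,t) = (\<Sum>k\<in>{0..<n}. mat_adjoint U $$ (s,k) * M $$ (k,t))"
    using carrier_matD[OF M] carrier_matD[OF mat_adjoint_carrier[OF rot_carrier]] s t
    by (simp add: U_def scalar_prod_def)
  also have "\<dots> = (\<Sum>k\<in>{0..<n}. cnj (U $$ (k,s)) * M $$ (k,t))"
    using s by (intro sum.cong) (simp_all add: U_def mat_adjoint_index[OF rot_carrier])
  also have "\<dots> = (\<Sum>k\<in>(if s \<in> {p, q} then {p, q} else {s}). cnj (U $$ (k,s)) * M $$ (k,t))"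
    using s pivots by (intro sum.mono_neutral_right) (auto simp: U_def rot_index_off_pivots)
  finally show ?thesis
    using s pivots by (auto simp: U_def rot_index_off_pivots)
qed

(* A pivot pair (i,j), 1-based as in R(i,j,phi,alpha), together with the angles (phi, alpha). *)
type_synonym rotation = "(nat \<times> nat) \<times> real \<times> real"

fun jacobi_step :: "nat \<Rightarrow> rotation \<Rightarrow> complex mat \<Rightarrow> complex mat" where
  "jacobi_step n ((i,j),\<phi>,\<alpha>) A = nu n i j (mat_adjoint (rot n i j \<phi> \<alpha>) * A * rot n i j \<phi> \<alpha>)"

lemma jacobi_step_carrier [simp]: "jacobi_step n r A \<in> carrier_mat n n"
  by (cases r) (auto simp: nu_def)

declare jacobi_step.simps [simp del]

(* The 0-based row and column indices p < q < n of the 1-based pivot pair (Suc p, Suc q). *)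
locale pivot_pair =
  fixes n p q :: nat
  assumes pivot_less: "p < q" and pivot_bound: "q < n"
begin

lemma pivots: "p < n" "q < n" "p \<noteq> q"
  using pivot_less pivot_bound by auto

lemma rot_pivot_entries:
  "rot n (Suc p) (Suc q) \<phi> \<alpha> $$ (p,p) = complex_of_real (cos \<phi>)"
  "rot n (Suc p) (Suc q) \<phi> \<alpha> $$ (q,q) = complex_of_real (cos \<phi>)"
  "rot n (Suc p) (Suc q) \<phi> \<alpha> $$ (p,q) = - cis \<alpha> * complex_of_real (sin \<phi>)"
  "rot n (Suc p) (Suc q) \<phi> \<alpha> $$ (q,p) = cnj (cis \<alpha>) * complex_of_real (sin \<phi>)"
proof -
  have "exp (\<i> * complex_of_real \<alpha>) = cis \<alpha>" "exp (- \<i> * complex_of_real \<alpha>) = cnj (cis \<alpha>)"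
    unfolding cis_cnj by (simp_all add: cis_conv_exp)
  then show "rot n (Suc p) (Suc q) \<phi> \<alpha> $$ (p,p) = complex_of_real (cos \<phi>)"
    "rot n (Suc p) (Suc q) \<phi> \<alpha> $$ (q,q) = complex_of_real (cos \<phi>)"
    "rot n (Suc p) (Suc q) \<phi> \<alpha> $$ (p,q) = - cis \<alpha> * complex_of_real (sin \<phi>)"
    "rot n (Suc p) (Suc q) \<phi> \<alpha> $$ (q,p) = cnj (cis \<alpha>) * complex_of_real (sin \<phi>)"
    using pivots by (simp_all add: rot_def)
qed

lemma conj_rot_index:
  fixes \<phi> \<alpha> :: real
  assumes A: "A \<in> carrier_mat n n" and s: "s < n" and t: "t < n"
  defines "U \<equiv> rot n (Suc p) (Suc q) \<phi> \<alpha>"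
  shows "(mat_adjoint U * A * U) $$ (s,t) = (if t \<in> {p, q}
    then (mat_adjoint U * A) $$ (s,p) * U $$ (p,t) + (mat_adjoint U * A) $$ (s,q) * U $$ (q,t)
    else (mat_adjoint U * A) $$ (s,t))"
  and "(mat_adjoint U * A) $$ (s,t) = (if s \<in> {p, q}
    then cnj (U $$ (p,s)) * A $$ (p,t) + cnj (U $$ (q,s)) * A $$ (q,t) else A $$ (s,t))"
  unfolding U_def
  by (rule mult_rot_index[OF mult_carrier_mat[OF mat_adjoint_carrier[OF rot_carrier] A] s t pivots],
      rule adjoint_rot_mult_index[OF A s t pivots])

lemma jacobi_step_index:
  assumes "s < n" "t < n" "(s,t) \<noteq> (p,q)" "(s,t) \<noteq> (q,p)"
  shows "jacobi_step n ((Suc p, Suc q),\<phi>,\<alpha>) A $$ (s,t)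
    = (mat_adjoint (rot n (Suc p) (Suc q) \<phi> \<alpha>) * A * rot n (Suc p) (Suc q) \<phi> \<alpha>) $$ (s,t)"
  using assms by (auto simp: nu_def jacobi_step.simps)

lemma jacobi_step_pivot:
  "jacobi_step n ((Suc p, Suc q),\<phi>,\<alpha>) A $$ (p,q) = 0"
  "jacobi_step n ((Suc p, Suc q),\<phi>,\<alpha>) A $$ (q,p) = 0"
  using pivots by (auto simp: nu_def jacobi_step.simps)

lemma jacobi_step_outside:
  assumes A: "A \<in> carrier_mat n n" and "s < n" "t < n" "s \<notin> {p, q}" "t \<notin> {p, q}"
  shows "jacobi_step n ((Suc p, Suc q),\<phi>,\<alpha>) A $$ (s,t) = A $$ (s,t)"
  using assms by (simp add: jacobi_step_index conj_rot_index)

lemma jacobi_step_rows: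
  assumes A: "A \<in> carrier_mat n n" and t: "t < n" "t \<notin> {p, q}"
  shows "jacobi_step n ((Suc p, Suc q),\<phi>,\<alpha>) A $$ (p,t)
           = complex_of_real (cos \<phi>) * A $$ (p,t) + cis \<alpha> * complex_of_real (sin \<phi>) * A $$ (q,t)"
    and "jacobi_step n ((Suc p, Suc q),\<phi>,\<alpha>) A $$ (q,t)
           = - cnj (cis \<alpha>) * complex_of_real (sin \<phi>) * A $$ (p,t) + complex_of_real (cos \<phi>) * A $$ (q,t)"
  using assms pivots
  by (simp_all add: jacobi_step_index conj_rot_index rot_pivot_entries)

lemma jacobi_step_cols:
  assumes A: "A \<in> carrier_mat n n" and s: "s < n" "s \<notin> {p, q}"
  shows "jacobi_step n ((Suc p, Suc q),\<phi>,\<alpha>) A $$ (s,p)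
           = complex_of_real (cos \<phi>) * A $$ (s,p) + cnj (cis \<alpha>) * complex_of_real (sin \<phi>) * A $$ (s,q)"
    and "jacobi_step n ((Suc p, Suc q),\<phi>,\<alpha>) A $$ (s,q)
           = - cis \<alpha> * complex_of_real (sin \<phi>) * A $$ (s,p) + complex_of_real (cos \<phi>) * A $$ (s,q)"
  using assms pivots
  by (simp_all add: jacobi_step_index conj_rot_index rot_pivot_entries algebra_simps)

end

section \<open>The off-diagonal norm\<close>

definition off_pairs :: "nat \<Rightarrow> (nat \<times> nat) set" where
  "off_pairs n = {(s,t). s < n \<and> t < n \<and> s \<noteq> t}"

definition off_sq :: "nat \<Rightarrow> complex mat \<Rightarrow> real" where
  "off_sq n A = (\<Sum>x\<in>off_pairs n. (cmod (A $$ x))\<^sup>2)"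

fun pivot_sq :: "nat \<times> nat \<Rightarrow> complex mat \<Rightarrow> real" where
  "pivot_sq (i,j) A = (cmod (A $$ (i-1,j-1)))\<^sup>2 + (cmod (A $$ (j-1,i-1)))\<^sup>2"

lemma finite_off_pairs [simp]: "finite (off_pairs n)"
  by (rule finite_subset[of _ "{..<n} \<times> {..<n}"]) (auto simp: off_pairs_def)

lemma sum_off_pairs_split:
  fixes h :: "nat \<times> nat \<Rightarrow> real"
  assumes pq: "p < n" "q < n" "p \<noteq> q"
  defines "T \<equiv> {t. t < n \<and> t \<notin> {p, q}}"
  shows "(\<Sum>x\<in>off_pairs n. h x) = (\<Sum>x\<in>off_pairs n \<inter> T \<times> T. h x)
     + (\<Sum>t\<in>T. h (p,t) + h (q,t)) + (\<Sum>s\<in>T. h (s,p) + h (s,q)) + (h (p,q) + h (q,p))"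
proof -
  define Inner where "Inner = off_pairs n \<inter> T \<times> T"
  have fin: "finite T" "finite Inner"
    by (simp_all add: T_def Inner_def)
  have split: "off_pairs n = Inner \<union> {p, q} \<times> T \<union> T \<times> {p, q} \<union> {(p,q), (q,p)}"
    using pq by (auto simp: off_pairs_def T_def Inner_def)
  have disjoint: "Inner \<inter> {p, q} \<times> T = {}" "(Inner \<union> {p, q} \<times> T) \<inter> T \<times> {p, q} = {}"
    "(Inner \<union> {p, q} \<times> T \<union> T \<times> {p, q}) \<inter> {(p,q), (q,p)} = {}"
    by (auto simp: T_def Inner_def)
  have "(\<Sum>x\<in>off_pairs n. h x) = (\<Sum>x\<in>Inner. h x)
      + (\<Sum>x\<in>{p, q} \<times> T. h x) + (\<Sum>x\<in>T \<times> {p, q}. h x) + (\<Sum>x\<in>{(p,q), (q,p)}. h x)"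
    unfolding split using fin
    by (simp only: sum.union_disjoint disjoint finite_UnI finite_cartesian_product finite.intros)
  moreover have "(\<Sum>x\<in>{p, q} \<times> T. h x) = (\<Sum>t\<in>T. h (p,t) + h (q,t))"
    using pq fin by (simp add: sum.cartesian_product' sum.distrib)
  moreover have "(\<Sum>x\<in>T \<times> {p, q}. h x) = (\<Sum>s\<in>T. h (s,p) + h (s,q))"
    using pq fin by (simp add: sum.cartesian_product' sum.swap[where A=T] sum.distrib)
  ultimately show ?thesis
    using pq by (simp add: Inner_def)
qed

lemma cmod_sq_rotation_pair:
  fixes a b w :: complex and c s :: real
  assumes "cmod w = 1" "c\<^sup>2 + s\<^sup>2 = 1"
  shows "(cmod (complex_of_real c * a + w * complex_of_real s * b))\<^sup>2
       + (cmod (- cnj w * complex_of_real s * a + complex_of_real c * b))\<^sup>2 = (cmod a)\<^sup>2 + (cmod b)\<^sup>2"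
proof -
  have w: "(Re w)\<^sup>2 + (Im w)\<^sup>2 = 1"
    using assms(1) by (metis cmod_power2 power_one)
  have scale: "\<And>x y :: real. x = (c\<^sup>2 + s\<^sup>2 * ((Re w)\<^sup>2 + (Im w)\<^sup>2)) * y \<Longrightarrow> x = y"
    using w assms(2) by simp
  show ?thesis
    unfolding cmod_power2 by (rule scale) (simp add: power2_eq_square algebra_simps)
qed

context pivot_pair
begin

lemma off_sq_jacobi_step:
  fixes \<phi> \<alpha> :: real
  assumes A: "A \<in> carrier_mat n n"
  defines "B \<equiv> jacobi_step n ((Suc p, Suc q),\<phi>,\<alpha>) A"
  shows "off_sq n B + pivot_sq (Suc p, Suc q) A = off_sq n A"
proof -
  define T where "T \<equiv> {t. t < n \<and> t \<notin> {p, q}}"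
  have T: "t < n" "t \<notin> {p, q}" if "t \<in> T" for t
    using that by (auto simp: T_def)
  have "(\<Sum>x\<in>off_pairs n \<inter> T \<times> T. (cmod (B $$ x))\<^sup>2) = (\<Sum>x\<in>off_pairs n \<inter> T \<times> T. (cmod (A $$ x))\<^sup>2)"
    using A by (intro sum.cong) (auto simp: B_def T_def jacobi_step_outside)
  moreover have "(\<Sum>t\<in>T. (cmod (B $$ (p,t)))\<^sup>2 + (cmod (B $$ (q,t)))\<^sup>2)
      = (\<Sum>t\<in>T. (cmod (A $$ (p,t)))\<^sup>2 + (cmod (A $$ (q,t)))\<^sup>2)"
  proof (intro sum.cong refl)
    fix t assume "t \<in> T"
    then show "(cmod (B $$ (p,t)))\<^sup>2 + (cmod (B $$ (q,t)))\<^sup>2 = (cmod (A $$ (p,t)))\<^sup>2 + (cmod (A $$ (q,t)))\<^sup>2"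
      using A T cmod_sq_rotation_pair[of "cis \<alpha>" "cos \<phi>" "sin \<phi>"]
      by (simp add: B_def jacobi_step_rows)
  qed
  moreover have "(\<Sum>s\<in>T. (cmod (B $$ (s,p)))\<^sup>2 + (cmod (B $$ (s,q)))\<^sup>2)
      = (\<Sum>s\<in>T. (cmod (A $$ (s,p)))\<^sup>2 + (cmod (A $$ (s,q)))\<^sup>2)"
  proof (intro sum.cong refl)
    fix s assume "s \<in> T"
    then show "(cmod (B $$ (s,p)))\<^sup>2 + (cmod (B $$ (s,q)))\<^sup>2 = (cmod (A $$ (s,p)))\<^sup>2 + (cmod (A $$ (s,q)))\<^sup>2"
      using A T cmod_sq_rotation_pair[of "cnj (cis \<alpha>)" "cos \<phi>" "sin \<phi>"]
      by (simp add: B_def jacobi_step_cols)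
  qed
  ultimately show ?thesis
    using sum_off_pairs_split[OF pivots, of "\<lambda>x. (cmod (B $$ x))\<^sup>2"]
      sum_off_pairs_split[OF pivots, of "\<lambda>x. (cmod (A $$ x))\<^sup>2"]
    by (simp add: off_sq_def B_def T_def jacobi_step_pivot)
qed

end

section \<open>The vectorisation ve\<close>

definition upper_pairs :: "nat \<Rightarrow> (nat \<times> nat) list" where
  "upper_pairs n = concat (map (\<lambda>t. map (\<lambda>s. (s,t)) [1..<t]) [2..<n+1])"

lemma upper_pairs_Suc:
  "upper_pairs (Suc n) = (if n = 0 then [] else upper_pairs n @ map (\<lambda>s. (s, Suc n)) [1..<Suc n])"
  unfolding upper_pairs_def by simp

lemma set_upper_pairs: "set (upper_pairs n) = {(s,t). 1 \<le> s \<and> s < t \<and> t \<le> n}"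
  unfolding upper_pairs_def by (fastforce simp: set_eq_iff)

lemma distinct_upper_pairs: "distinct (upper_pairs n)"
proof (induction n)
  case (Suc n)
  then show ?case
    by (auto simp: upper_pairs_Suc distinct_map inj_on_def set_upper_pairs)
qed (simp add: upper_pairs_def)

lemma length_upper_pairs: "length (upper_pairs n) = Nn n"
proof (induction n)
  case (Suc n)
  have "Nn (Suc n) = Nn n + n"
    by (cases n) (auto simp: Nn_def)
  with Suc show ?case
    by (simp add: upper_pairs_Suc Nn_def)
qed (simp add: upper_pairs_def Nn_def)

definition ve_pairs :: "nat \<Rightarrow> (nat \<times> nat) list" where
  "ve_pairs n = upper_pairs n @ map prod.swap (upper_pairs n)"

lemma ve_ve_pairs: "ve n A = vec_of_list (map (\<lambda>(s,t). A $$ (s-1,t-1)) (ve_pairs n))"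
  unfolding ve_def ve_pairs_def upper_pairs_def by (simp add: map_concat comp_def)

lemma set_ve_pairs: "set (ve_pairs n) = {(s,t). 1 \<le> s \<and> s \<le> n \<and> 1 \<le> t \<and> t \<le> n \<and> s \<noteq> t}"
  unfolding ve_pairs_def set_append set_map set_upper_pairs by auto

lemma distinct_ve_pairs: "distinct (ve_pairs n)"
  using distinct_upper_pairs by (auto simp: ve_pairs_def distinct_map set_upper_pairs)

lemma dim_ve: "dim_vec (ve n A) = 2 * Nn n"
  by (simp add: ve_ve_pairs ve_pairs_def length_upper_pairs)

lemma vnorm2_ve: "vnorm2 (ve n A) = sqrt (off_sq n A)"
proof -
  let ?a = "\<lambda>(s,t). A $$ (s-1,t-1)"
  have "(\<Sum>k<dim_vec (ve n A). (cmod (ve n A $ k))\<^sup>2) = (\<Sum>k<length (ve_pairs n). (cmod (?a (ve_pairs n ! k)))\<^sup>2)"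
    by (simp add: ve_ve_pairs vec_of_list_index del: vec_of_list_map)
  also have "\<dots> = (\<Sum>x\<in>set (ve_pairs n). (cmod (?a x))\<^sup>2)"
    by (simp add: sum_list_distinct_conv_sum_set[OF distinct_ve_pairs, symmetric]
        sum_list_sum_nth atLeast0LessThan)
  also have "\<dots> = off_sq n A"
    unfolding off_sq_def set_ve_pairs
    by (rule sum.reindex_bij_witness[where i="\<lambda>(s,t). (s+1,t+1)" and j="\<lambda>(s,t). (s-1,t-1)"])
      (auto simp: off_pairs_def)
  finally show ?thesis
    unfolding vnorm2_def by simp
qed

lemma ve_surj:
  assumes x: "x \<in> carrier_vec (2 * Nn n)"
  obtains A where "A \<in> carrier_mat n n" "x = ve n A"
proof
  let ?P = "ve_pairs n"
  define A where "A = mat n n (\<lambda>(s,t). x $ (SOME k. k < length ?P \<and> ?P ! k = (s+1,t+1)))"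
  show "A \<in> carrier_mat n n"
    by (simp add: A_def)
  show "x = ve n A"
  proof (rule eq_vecI)
    show "dim_vec x = dim_vec (ve n A)"
      using x by (simp add: dim_ve)
  next
    fix k assume "k < dim_vec (ve n A)"
    then have k: "k < length ?P"
      by (simp add: ve_ve_pairs)
    obtain s t where st: "?P ! k = (s,t)"
      by fastforce
    have "(s,t) \<in> set ?P"
      using st k by (metis nth_mem)
    then have "1 \<le> s" "s \<le> n" "1 \<le> t" "t \<le> n"
      unfolding set_ve_pairs by auto
    moreover have "(SOME k'. k' < length ?P \<and> ?P ! k' = (s,t)) = k"
    proof (rule some_equality)
      fix k' assume "k' < length ?P \<and> ?P ! k' = (s,t)"
      then show "k' = k"
        using k st distinct_ve_pairs by (metis nth_eq_iff_index_eq)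
    qed (use k st in simp)
    ultimately show "x $ k = ve n A $ k"
      using k st by (simp add: ve_ve_pairs vec_of_list_index A_def del: vec_of_list_map)
  qed
qed

section \<open>Runs of Jacobi steps and the class of Jacobi operators\<close>

fun rot_angle :: "rotation \<Rightarrow> real" where
  "rot_angle (_, \<phi>, _) = \<phi>"

definition pivot_pairs :: "nat \<Rightarrow> (nat \<times> nat) set" where
  "pivot_pairs n = {(i,j). 1 \<le> i \<and> i < j \<and> j \<le> n}"

lemma pivot_pairsE:
  assumes "(i,j) \<in> pivot_pairs n"
  obtains p q where "i = Suc p" "j = Suc q" "pivot_pair n p q"
  using assms by (auto simp: pivot_pairs_def pivot_pair_def intro!: that[of "i - 1" "j - 1"])

fun jacobi_run :: "nat \<Rightarrow> rotation list \<Rightarrow> complex mat \<Rightarrow> complex mat" where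
  "jacobi_run n [] A = A"
| "jacobi_run n (r # rs) A = jacobi_run n rs (jacobi_step n r A)"

fun annihilated_sq :: "nat \<Rightarrow> rotation list \<Rightarrow> complex mat \<Rightarrow> real" where
  "annihilated_sq n [] A = 0"
| "annihilated_sq n (r # rs) A = pivot_sq (fst r) A + annihilated_sq n rs (jacobi_step n r A)"

lemma jacobi_run_append: "jacobi_run n (rs @ rs') A = jacobi_run n rs' (jacobi_run n rs A)"
  by (induction rs arbitrary: A) auto

lemma annihilated_sq_append:
  "annihilated_sq n (rs @ rs') A = annihilated_sq n rs A + annihilated_sq n rs' (jacobi_run n rs A)"
  by (induction rs arbitrary: A) auto

lemma annihilated_sq_nonneg: "0 \<le> annihilated_sq n rs A"
  by (induction rs arbitrary: A) auto

lemma jacobi_run_carrier: "A \<in> carrier_mat n n \<Longrightarrow> jacobi_run n rs A \<in> carrier_mat n n"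
  by (induction rs arbitrary: A) auto

lemma pivot_sq_le_annihilated_sq:
  "pivot_sq (fst r) (jacobi_run n rs A) \<le> annihilated_sq n (rs @ r # rs') A"
  using annihilated_sq_nonneg[of n rs A] annihilated_sq_nonneg[of n rs']
  by (simp add: annihilated_sq_append)

lemma off_sq_jacobi_run:
  assumes "fst ` set rs \<subseteq> pivot_pairs n" "A \<in> carrier_mat n n"
  shows "off_sq n (jacobi_run n rs A) + annihilated_sq n rs A = off_sq n A"
  using assms
proof (induction rs arbitrary: A)
  case (Cons r rs)
  obtain i j \<phi> \<alpha> where r: "r = ((i,j),\<phi>,\<alpha>)"
    by (metis prod.collapse)
  with Cons.prems obtain p q where "i = Suc p" "j = Suc q" "pivot_pair n p q"
    by (auto elim: pivot_pairsE)
  then have "off_sq n (jacobi_step n r A) + pivot_sq (fst r) A = off_sq n A"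
    using pivot_pair.off_sq_jacobi_step[OF _ Cons.prems(2)] r by simp
  moreover have "off_sq n (jacobi_run n rs (jacobi_step n r A)) + annihilated_sq n rs (jacobi_step n r A)
      = off_sq n (jacobi_step n r A)"
    using Cons by simp
  ultimately show ?case
    by simp
qed simp

lemma jacobi_class_run:
  assumes "J \<in> jacobi_class n \<nu> ord"
  shows "\<exists>rs. map fst rs = ord \<and> (\<forall>r\<in>set rs. \<nu> \<le> \<bar>cos (rot_angle r)\<bar>) \<and>
    J \<in> carrier_mat (2 * Nn n) (2 * Nn n) \<and>
    (\<forall>A\<in>carrier_mat n n. J *\<^sub>v ve n A = ve n (jacobi_run n rs A))"
  using assms
proof (induction ord arbitrary: J)
  case Nil
  then show ?case
    by (auto intro!: exI[of _ "[]"] simp: dim_ve carrier_vecI)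
next
  case (Cons ij ord)
  obtain i j where ij: "ij = (i,j)"
    by fastforce
  from Cons.prems obtain J' R where J: "J = J' * R" and J': "J' \<in> jacobi_class n \<nu> ord"
    and R: "R \<in> ann_set n \<nu> ij"
    by auto
  from Cons.IH[OF J'] obtain rs where rs: "map fst rs = ord" "\<forall>r\<in>set rs. \<nu> \<le> \<bar>cos (rot_angle r)\<bar>"
    and J'_carrier: "J' \<in> carrier_mat (2 * Nn n) (2 * Nn n)"
    and J'_run: "\<forall>A\<in>carrier_mat n n. J' *\<^sub>v ve n A = ve n (jacobi_run n rs A)"
    by blast
  from R obtain \<phi> \<alpha> where cos: "\<nu> \<le> \<bar>cos \<phi>\<bar>"
    and R_carrier: "R \<in> carrier_mat (2 * Nn n) (2 * Nn n)"
    and R_step: "\<forall>A\<in>carrier_mat n n. R *\<^sub>v ve n A = ve n (jacobi_step n (ij,\<phi>,\<alpha>) A)"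
    by (auto simp: ann_set_def is_annihilator_def ij jacobi_step.simps)
  have "J *\<^sub>v ve n A = ve n (jacobi_run n ((ij,\<phi>,\<alpha>) # rs) A)" if A: "A \<in> carrier_mat n n" for A
  proof -
    have "J *\<^sub>v ve n A = J' *\<^sub>v (R *\<^sub>v ve n A)"
      unfolding J using J'_carrier R_carrier by (rule assoc_mult_mat_vec) (simp add: carrier_vecI dim_ve)
    with A R_step J'_run show ?thesis
      by simp
  qed
  with rs cos J'_carrier R_carrier show ?case
    by (intro exI[of _ "(ij,\<phi>,\<alpha>) # rs"]) (auto simp: J)
qed

lemma spec_norm_le:
  assumes "0 \<le> \<mu>" and "\<And>x. x \<in> carrier_vec (dim_col J) \<Longrightarrow> vnorm2 (J *\<^sub>v x) \<le> \<mu> * vnorm2 x"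
  shows "spec_norm J \<le> \<mu>"
  unfolding spec_norm_def
proof (rule cSup_least)
  have "0\<^sub>v (dim_col J) \<in> carrier_vec (dim_col J)" "vnorm2 (0\<^sub>v (dim_col J)) \<le> 1"
    by (simp_all add: vnorm2_def)
  then show "{vnorm2 (J *\<^sub>v x) |x. x \<in> carrier_vec (dim_col J) \<and> vnorm2 x \<le> 1} \<noteq> {}"
    by blast
next
  fix y assume "y \<in> {vnorm2 (J *\<^sub>v x) |x. x \<in> carrier_vec (dim_col J) \<and> vnorm2 x \<le> 1}"
  then obtain x where "x \<in> carrier_vec (dim_col J)" "vnorm2 x \<le> 1" "y = vnorm2 (J *\<^sub>v x)"
    by blast
  with assms show "y \<le> \<mu>"
    using mult_left_le[of "vnorm2 x" \<mu>] by fastforce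
qed

section \<open>Entry bounds along a column ordering\<close>

definition leading_offdiag_le :: "nat \<Rightarrow> complex mat \<Rightarrow> real \<Rightarrow> bool" where
  "leading_offdiag_le m A M \<longleftrightarrow> (\<forall>s<m. \<forall>t<m. s \<noteq> t \<longrightarrow> cmod (A $$ (s,t)) \<le> M)"

lemma leading_offdiag_leD: "leading_offdiag_le m A M \<Longrightarrow> s < m \<Longrightarrow> t < m \<Longrightarrow> s \<noteq> t \<Longrightarrow> cmod (A $$ (s,t)) \<le> M"
  by (simp add: leading_offdiag_le_def)

lemma leading_offdiag_le_mono: "leading_offdiag_le m A M \<Longrightarrow> M \<le> M' \<Longrightarrow> leading_offdiag_le m A M'"
  by (auto simp: leading_offdiag_le_def intro: order_trans)

lemma leading_offdiag_le_one: "m \<le> 1 \<Longrightarrow> leading_offdiag_le m A M"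
  by (auto simp: leading_offdiag_le_def)

lemma cmod_lincomb_le:
  fixes u v a b :: complex
  assumes "cmod u \<le> 1" "cmod v \<le> 1" "cmod a \<le> M" "cmod b \<le> M"
  shows "cmod (u * a + v * b) \<le> 2 * M"
proof -
  have "cmod (u * a + v * b) \<le> cmod u * cmod a + cmod v * cmod b"
    by (metis norm_mult norm_triangle_ineq)
  also have "\<dots> \<le> 1 * M + 1 * M"
    using assms by (intro add_mono mult_mono) auto
  finally show ?thesis
    by simp
qed

lemma (in pivot_pair) jacobi_step_leading_offdiag_le:
  assumes A: "A \<in> carrier_mat n n" and m: "q < m" "m \<le> n" and bound: "leading_offdiag_le m A M"
  shows "leading_offdiag_le m (jacobi_step n ((Suc p, Suc q),\<phi>,\<alpha>) A) (2 * M)"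
  unfolding leading_offdiag_le_def
proof (intro allI impI)
  fix s t assume st: "s < m" "t < m" "s \<noteq> t"
  let ?B = "jacobi_step n ((Suc p, Suc q),\<phi>,\<alpha>) A"
  note a = leading_offdiag_leD[OF bound]
  have "cmod (A $$ (p,q)) \<le> M"
    using m pivot_less by (intro a) auto
  then have M: "0 \<le> M"
    by (meson norm_ge_zero order_trans)
  have units: "cmod (complex_of_real (cos \<phi>)) \<le> 1"
    "cmod (cis \<alpha> * complex_of_real (sin \<phi>)) \<le> 1" "cmod (- cis \<alpha> * complex_of_real (sin \<phi>)) \<le> 1"
    "cmod (cnj (cis \<alpha>) * complex_of_real (sin \<phi>)) \<le> 1"
    "cmod (- cnj (cis \<alpha>) * complex_of_real (sin \<phi>)) \<le> 1"
    by (simp_all add: norm_mult abs_sin_le_one abs_cos_le_one)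
  consider "(s,t) = (p,q) \<or> (s,t) = (q,p)" | "s \<in> {p, q}" "t \<notin> {p, q}" | "s \<notin> {p, q}" "t \<in> {p, q}"
    | "s \<notin> {p, q}" "t \<notin> {p, q}"
    using st(3) by blast
  then show "cmod (?B $$ (s,t)) \<le> 2 * M"
  proof cases
    case 1
    then show ?thesis
      using M jacobi_step_pivot by auto
  next
    case 2
    then have t: "t < n" "t \<notin> {p, q}"
      using st m by auto
    have "cmod (A $$ (p,t)) \<le> M" "cmod (A $$ (q,t)) \<le> M"
      using 2 st m pivot_less by (auto intro!: a)
    with 2 show ?thesis
      by (auto simp only: jacobi_step_rows[OF A t] insert_iff intro!: cmod_lincomb_le units)
  next
    case 3
    then have s: "s < n" "s \<notin> {p, q}"
      using st m by auto
    have "cmod (A $$ (s,p)) \<le> M" "cmod (A $$ (s,q)) \<le> M"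
      using 3 st m pivot_less by (auto intro!: a)
    with 3 show ?thesis
      by (auto simp only: jacobi_step_cols[OF A s] insert_iff intro!: cmod_lincomb_le units)
  next
    case 4
    then show ?thesis
      using st m A a[OF st] M by (simp add: jacobi_step_outside)
  qed
qed

lemma jacobi_run_leading_offdiag_le:
  assumes "fst ` set rs \<subseteq> pivot_pairs m" "m \<le> n" "A \<in> carrier_mat n n" "leading_offdiag_le m A M"
  shows "leading_offdiag_le m (jacobi_run n rs A) (2 ^ length rs * M)"
  using assms
proof (induction rs arbitrary: A M)
  case (Cons r rs)
  obtain i j \<phi> \<alpha> where r: "r = ((i,j),\<phi>,\<alpha>)"
    by (metis prod.collapse)
  with Cons.prems obtain p q where pq: "i = Suc p" "j = Suc q" "pivot_pair m p q"
    by (auto elim: pivot_pairsE)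
  then have "pivot_pair n p q"
    using Cons.prems(2) by (simp add: pivot_pair_def)
  then have "leading_offdiag_le m (jacobi_step n r A) (2 * M)"
    using pivot_pair.jacobi_step_leading_offdiag_le[OF _ Cons.prems(3) _ Cons.prems(2,4)] pq r
    by (simp add: pivot_pair_def)
  from Cons.IH[OF _ Cons.prems(2) jacobi_step_carrier this] Cons.prems(1)
  show ?case
    by (simp add: mult.assoc mult.left_commute)
qed simp

lemma abs_prod_cos_le_one: "\<bar>\<Prod>r\<leftarrow>rs. cos (rot_angle r)\<bar> \<le> 1"
  by (induction rs) (auto simp: abs_mult abs_cos_le_one intro: mult_le_one)

lemma prod_cos_ge:
  assumes "0 \<le> \<nu>" "\<forall>r\<in>set rs. \<nu> \<le> \<bar>cos (rot_angle r)\<bar>"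
  shows "\<nu> ^ length rs \<le> \<bar>\<Prod>r\<leftarrow>rs. cos (rot_angle r)\<bar>"
  using assms(2) by (induction rs) (auto simp: abs_mult intro!: mult_mono assms(1) zero_le_power)

lemma jacobi_run_entry_drift:
  fixes e :: "complex mat \<Rightarrow> complex" and f :: "nat \<Rightarrow> complex mat \<Rightarrow> complex" and B :: real
  assumes "distinct (map (fst \<circ> fst) rs)"
    and "\<And>Y r. Y \<in> carrier_mat n n \<Longrightarrow> r \<in> set rs \<Longrightarrow>
      cmod (e (jacobi_step n r Y) - cos (rot_angle r) * e Y) \<le> cmod (f (fst (fst r)) Y)"
    and "\<And>Y r r'. Y \<in> carrier_mat n n \<Longrightarrow> r \<in> set rs \<Longrightarrow> r' \<in> set rs \<Longrightarrow>
      fst (fst r') \<noteq> fst (fst r) \<Longrightarrow> f (fst (fst r')) (jacobi_step n r Y) = f (fst (fst r')) Y"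
    and "Y \<in> carrier_mat n n" "\<forall>r\<in>set rs. cmod (f (fst (fst r)) Y) \<le> B"
  shows "cmod (e (jacobi_run n rs Y) - (\<Prod>r\<leftarrow>rs. cos (rot_angle r)) * e Y) \<le> real (length rs) * B"
  using assms
proof (induction rs arbitrary: Y)
  case Nil
  then show ?case
    by simp
next
  case (Cons r rs)
  let ?Y' = "jacobi_step n r Y" and ?P = "\<Prod>r\<leftarrow>rs. cos (rot_angle r)"
  have "\<forall>r'\<in>set rs. cmod (f (fst (fst r')) ?Y') \<le> B"
  proof
    fix r' assume r': "r' \<in> set rs"
    moreover have "fst (fst r) \<notin> (\<lambda>r. fst (fst r)) ` set rs"
      using Cons.prems(1) by simp
    ultimately have "fst (fst r') \<noteq> fst (fst r)"
      by (metis imageI)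
    with Cons.prems(3,4) r' have "f (fst (fst r')) ?Y' = f (fst (fst r')) Y"
      by simp
    with Cons.prems(5) r' show "cmod (f (fst (fst r')) ?Y') \<le> B"
      by simp
  qed
  then have IH: "cmod (e (jacobi_run n rs ?Y') - ?P * e ?Y') \<le> real (length rs) * B"
    using Cons.prems(1-3) by (intro Cons.IH) auto
  have "cmod (e ?Y' - cos (rot_angle r) * e Y) \<le> B"
    using Cons.prems(2)[OF Cons.prems(4), of r] Cons.prems(5) by auto
  then have "cmod (?P * (e ?Y' - cos (rot_angle r) * e Y)) \<le> 1 * B"
    unfolding norm_mult using abs_prod_cos_le_one by (intro mult_mono) auto
  with IH have "cmod ((e (jacobi_run n rs ?Y') - ?P * e ?Y') + ?P * (e ?Y' - cos (rot_angle r) * e Y))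
      \<le> real (length rs) * B + B"
    using norm_triangle_ineq[of "e (jacobi_run n rs ?Y') - ?P * e ?Y'" "?P * (e ?Y' - cos (rot_angle r) * e Y)"]
    by linarith
  then show ?case
    by (simp add: algebra_simps)
qed

lemma (in pivot_pair) jacobi_step_drift:
  fixes \<phi> \<alpha> :: real
  assumes A: "A \<in> carrier_mat n n" and x: "x < n" "x \<notin> {p, q}"
  defines "B \<equiv> jacobi_step n ((Suc p, Suc q),\<phi>,\<alpha>) A"
  shows "cmod (B $$ (x,q) - cos \<phi> * A $$ (x,q)) \<le> cmod (A $$ (x,p))"
    and "cmod (B $$ (q,x) - cos \<phi> * A $$ (q,x)) \<le> cmod (A $$ (p,x))"
  using A x abs_sin_le_one[of \<phi>]
  by (simp_all add: B_def jacobi_step_rows jacobi_step_cols norm_mult mult_left_le_one_le)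

lemma jacobi_run_cross_drift:
  assumes c: "c < n" and x: "x < c" and Y: "Y \<in> carrier_mat n n"
    and rs: "\<forall>r\<in>set rs. \<exists>p \<phi> \<alpha>. r = ((Suc p, Suc c),\<phi>,\<alpha>) \<and> p < c \<and> p \<noteq> x"
    and distinct: "distinct (map (fst \<circ> fst) rs)" and bound: "leading_offdiag_le c Y B"
  defines "P \<equiv> \<Prod>r\<leftarrow>rs. cos (rot_angle r)"
  shows "cmod (jacobi_run n rs Y $$ (x,c) - P * Y $$ (x,c)) \<le> real (length rs) * B"
    and "cmod (jacobi_run n rs Y $$ (c,x) - P * Y $$ (c,x)) \<le> real (length rs) * B"
proof -
  have rot: "\<exists>p \<phi> \<alpha>. r = ((Suc p, Suc c),\<phi>,\<alpha>) \<and> pivot_pair n p c \<and> p < c \<and> p \<noteq> x"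
    if "r \<in> set rs" for r
    using rs that c unfolding pivot_pair_def by (meson order.strict_trans)
  have outside: "jacobi_step n r Z $$ (s, fst (fst r') - 1) = Z $$ (s, fst (fst r') - 1)"
    "jacobi_step n r Z $$ (fst (fst r') - 1, s) = Z $$ (fst (fst r') - 1, s)"
    if Z: "Z \<in> carrier_mat n n" and r: "r \<in> set rs" and r': "r' \<in> set rs"
      and "fst (fst r') \<noteq> fst (fst r)" "s < c" "s \<noteq> fst (fst r) - 1" "s \<noteq> fst (fst r') - 1"
    for Z r r' s
  proof -
    obtain p \<phi> \<alpha> where "r = ((Suc p, Suc c),\<phi>,\<alpha>)" "pivot_pair n p c"
      using rot[OF r] by blast
    moreover obtain p' \<phi>' \<alpha>' where "r' = ((Suc p', Suc c),\<phi>',\<alpha>')" "p' < c"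
      using rot[OF r'] by blast
    ultimately show "jacobi_step n r Z $$ (s, fst (fst r') - 1) = Z $$ (s, fst (fst r') - 1)"
      "jacobi_step n r Z $$ (fst (fst r') - 1, s) = Z $$ (fst (fst r') - 1, s)"
      using that c by (simp_all add: pivot_pair.jacobi_step_outside)
  qed
  have fst_bound: "fst (fst r) - 1 < c" "x \<noteq> fst (fst r) - 1" if "r \<in> set rs" for r
    using rot[OF that] by auto
  have bound_Y: "cmod (Y $$ (x, fst (fst r) - 1)) \<le> B" "cmod (Y $$ (fst (fst r) - 1, x)) \<le> B"
    if "r \<in> set rs" for r
    using fst_bound[OF that] x by (auto intro!: leading_offdiag_leD[OF bound])
  show "cmod (jacobi_run n rs Y $$ (x,c) - P * Y $$ (x,c)) \<le> real (length rs) * B"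
    unfolding P_def
  proof (rule jacobi_run_entry_drift[where f = "\<lambda>k Y. Y $$ (x, k-1)", OF distinct _ _ Y])
    show "cmod (jacobi_step n r Z $$ (x,c) - cos (rot_angle r) * Z $$ (x,c)) \<le> cmod (Z $$ (x, fst (fst r) - 1))"
      if "Z \<in> carrier_mat n n" "r \<in> set rs" for Z r
      using rot[OF that(2)] that(1) c x pivot_pair.jacobi_step_drift(1) by fastforce
    show "jacobi_step n r Z $$ (x, fst (fst r') - 1) = Z $$ (x, fst (fst r') - 1)"
      if "Z \<in> carrier_mat n n" "r \<in> set rs" "r' \<in> set rs" "fst (fst r') \<noteq> fst (fst r)" for Z r r'
      using that x fst_bound by (intro outside) auto
  qed (use bound_Y in auto)
  show "cmod (jacobi_run n rs Y $$ (c,x) - P * Y $$ (c,x)) \<le> real (length rs) * B"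
    unfolding P_def
  proof (rule jacobi_run_entry_drift[where f = "\<lambda>k Y. Y $$ (k-1, x)", OF distinct _ _ Y])
    show "cmod (jacobi_step n r Z $$ (c,x) - cos (rot_angle r) * Z $$ (c,x)) \<le> cmod (Z $$ (fst (fst r) - 1, x))"
      if "Z \<in> carrier_mat n n" "r \<in> set rs" for Z r
      using rot[OF that(2)] that(1) c x pivot_pair.jacobi_step_drift(2) by fastforce
    show "jacobi_step n r Z $$ (fst (fst r') - 1, x) = Z $$ (fst (fst r') - 1, x)"
      if "Z \<in> carrier_mat n n" "r \<in> set rs" "r' \<in> set rs" "fst (fst r') \<noteq> fst (fst r)" for Z r r'
      using that x fst_bound by (intro outside) auto
  qed (use bound_Y in auto)
qed

lemma column_sweep_split:
  assumes rs: "map fst rs = map (\<lambda>k. (k, Suc c)) ks" "distinct ks" "set ks = {1..c}" and x: "x < c"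
  obtains rs1 r0 rs2 where "rs = rs1 @ r0 # rs2" "fst r0 = (Suc x, Suc c)" "length rs1 \<le> c"
    "\<forall>r\<in>set rs1. \<exists>p \<phi> \<alpha>. r = ((Suc p, Suc c),\<phi>,\<alpha>) \<and> p < c \<and> p \<noteq> x"
    "distinct (map (fst \<circ> fst) rs1)"
proof -
  let ?f = "\<lambda>k. (k, Suc c)"
  have "Suc x \<in> set ks"
    using rs(3) x by auto
  then obtain ks1 ks2 where ks: "ks = ks1 @ Suc x # ks2"
    by (meson split_list)
  with rs(1) have "map fst rs = map ?f ks1 @ ?f (Suc x) # map ?f ks2"
    by simp
  then obtain rs1 r0 rs2 where split: "rs = rs1 @ r0 # rs2" and rs1: "map ?f ks1 = map fst rs1"
    and r0: "fst r0 = (Suc x, Suc c)"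
    by (auto simp: map_eq_append_conv)
  have "length rs1 = length ks1"
    using arg_cong[OF rs1, of length] by simp
  also have "\<dots> \<le> length ks"
    using ks by simp
  also have "\<dots> = c"
    using distinct_card[OF rs(2)] rs(3) by simp
  finally have len: "length rs1 \<le> c" .
  have ks1: "set ks1 \<subseteq> {1..c} - {Suc x}" "distinct ks1"
    using ks rs(2,3) by auto
  have fst_rs1: "fst ` set rs1 = ?f ` set ks1"
    using arg_cong[OF rs1, of set] by simp
  have "\<exists>p \<phi> \<alpha>. r = ((Suc p, Suc c),\<phi>,\<alpha>) \<and> p < c \<and> p \<noteq> x" if "r \<in> set rs1" for r
  proof -
    obtain i j \<phi> \<alpha> where r: "r = ((i,j),\<phi>,\<alpha>)"
      by (metis prod.collapse)
    with that have "(i,j) \<in> fst ` set rs1"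
      by (metis fst_conv imageI)
    with fst_rs1 ks1(1) have "j = Suc c" "i \<in> {1..c} - {Suc x}"
      by auto
    with r show ?thesis
      by (intro exI[of _ "i - 1"]) auto
  qed
  moreover have "map (fst \<circ> fst) rs1 = ks1"
    using arg_cong[OF rs1, of "map fst"] by (simp add: comp_def)
  with ks1(2) have "distinct (map (fst \<circ> fst) rs1)"
    by simp
  ultimately show ?thesis
    using that split r0 len by blast
qed

lemma cmod_le_of_drift:
  fixes w z :: complex and P :: real
  assumes "cmod (w - P * z) \<le> D" "cmod w \<le> E" "0 < a" "a \<le> \<bar>P\<bar>"
  shows "cmod z \<le> (E + D) / a"
proof -
  have "a * cmod z \<le> cmod (P * z)"
    using assms(4) by (simp add: norm_mult mult_right_mono)
  also have "\<dots> \<le> cmod w + cmod (w - P * z)"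
    using norm_triangle_ineq4[of w "w - P * z"] by simp
  also have "\<dots> \<le> E + D"
    using assms(1,2) by simp
  finally show ?thesis
    using assms(3) by (simp add: pos_le_divide_eq mult.commute)
qed

lemma jacobi_run_new_column_entries:
  assumes \<nu>: "0 < \<nu>" "\<nu> \<le> 1" and c: "c < n" and x: "x < c" and Y: "Y \<in> carrier_mat n n"
    and rs: "map fst rs = map (\<lambda>k. (k, Suc c)) ks" "distinct ks" "set ks = {1..c}"
    and cos: "\<forall>r\<in>set rs. \<nu> \<le> \<bar>cos (rot_angle r)\<bar>"
    and B: "0 \<le> B" "leading_offdiag_le c Y B" and L: "annihilated_sq n rs Y \<le> L"
  shows "cmod (Y $$ (x,c)) \<le> (sqrt L + c * B) / \<nu> ^ c \<and> cmod (Y $$ (c,x)) \<le> (sqrt L + c * B) / \<nu> ^ c"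
proof -
  obtain rs1 r0 rs2 where split: "rs = rs1 @ r0 # rs2" and r0: "fst r0 = (Suc x, Suc c)"
    and len: "length rs1 \<le> c"
    and pivots1: "\<forall>r\<in>set rs1. \<exists>p \<phi> \<alpha>. r = ((Suc p, Suc c),\<phi>,\<alpha>) \<and> p < c \<and> p \<noteq> x"
    and distinct1: "distinct (map (fst \<circ> fst) rs1)"
    using column_sweep_split[OF rs x] by blast
  let ?Z = "jacobi_run n rs1 Y" and ?P = "\<Prod>r\<leftarrow>rs1. cos (rot_angle r)"
  have "(cmod (?Z $$ (x,c)))\<^sup>2 + (cmod (?Z $$ (c,x)))\<^sup>2 \<le> L"
    using pivot_sq_le_annihilated_sq[of r0 n rs1 Y rs2] r0 split L by simp
  then have "(cmod (?Z $$ (x,c)))\<^sup>2 \<le> L" "(cmod (?Z $$ (c,x)))\<^sup>2 \<le> L"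
    using zero_le_power2[of "cmod (?Z $$ (x,c))"] zero_le_power2[of "cmod (?Z $$ (c,x))"] by linarith+
  then have Z: "cmod (?Z $$ (x,c)) \<le> sqrt L" "cmod (?Z $$ (c,x)) \<le> sqrt L"
    by (simp_all add: real_le_rsqrt)
  have "\<nu> ^ c \<le> \<nu> ^ length rs1"
    using len \<nu> by (intro power_decreasing) auto
  also have "\<dots> \<le> \<bar>?P\<bar>"
    using \<nu> cos split by (intro prod_cos_ge) auto
  finally have P: "\<nu> ^ c \<le> \<bar>?P\<bar>" .
  note drift = jacobi_run_cross_drift[OF c x Y pivots1 distinct1 B(2)]
  have "real (length rs1) * B \<le> c * B"
    using len B(1) by (intro mult_right_mono) auto
  with drift have "cmod (?Z $$ (x,c) - ?P * Y $$ (x,c)) \<le> c * B" "cmod (?Z $$ (c,x) - ?P * Y $$ (c,x)) \<le> c * B"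
    by linarith+
  with Z P \<nu>(1) show ?thesis
    using cmod_le_of_drift by simp
qed

lemma jacobi_run_new_column:
  assumes \<nu>: "0 < \<nu>" "\<nu> \<le> 1" and c: "1 \<le> c" "c < n" and Y: "Y \<in> carrier_mat n n"
    and rs: "map fst rs = map (\<lambda>k. (k, Suc c)) ks" "distinct ks" "set ks = {1..c}"
    and cos: "\<forall>r\<in>set rs. \<nu> \<le> \<bar>cos (rot_angle r)\<bar>"
    and B: "0 \<le> B" "leading_offdiag_le c Y B" and L: "annihilated_sq n rs Y \<le> L"
  shows "leading_offdiag_le (Suc c) (jacobi_run n rs Y) (2 ^ c * ((sqrt L + c * B) / \<nu> ^ c))"
proof -
  define M where "M = (sqrt L + c * B) / \<nu> ^ c"
  have "0 \<le> L"
    using L annihilated_sq_nonneg order_trans by blast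
  have "B \<le> c * B"
    using c B(1) by (simp add: mult_le_cancel_right1)
  also have "\<dots> \<le> sqrt L + c * B"
    using \<open>0 \<le> L\<close> by simp
  also have "\<dots> \<le> M"
    unfolding M_def using \<nu> \<open>0 \<le> L\<close> B(1)
    by (simp add: le_divide_eq mult_left_le power_le_one)
  finally have "B \<le> M" .
  have "leading_offdiag_le (Suc c) Y M"
    unfolding leading_offdiag_le_def
  proof (intro allI impI)
    fix s t assume "s < Suc c" "t < Suc c" "s \<noteq> t"
    then consider "s < c" "t < c" | "s < c" "t = c" | "s = c" "t < c"
      by linarith
    then show "cmod (Y $$ (s,t)) \<le> M"
      using jacobi_run_new_column_entries[OF \<nu> c(2) _ Y rs cos B L] \<open>B \<le> M\<close> leading_offdiag_leD[OF B(2)]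
        \<open>s \<noteq> t\<close> unfolding M_def by cases force+
  qed
  moreover have "fst ` set rs \<subseteq> pivot_pairs (Suc c)"
    using arg_cong[OF rs(1), of set] rs(3) by (auto simp: pivot_pairs_def)
  moreover have "length rs = c"
    using arg_cong[OF rs(1), of length] distinct_card[OF rs(2)] rs(3) by simp
  ultimately show ?thesis
    using jacobi_run_leading_offdiag_le[of rs "Suc c" n Y M] c Y by (simp add: M_def)
qed

definition column_ordering :: "(nat \<Rightarrow> nat \<Rightarrow> nat) \<Rightarrow> nat \<Rightarrow> (nat \<times> nat) list" where
  "column_ordering \<tau> m = concat (map (\<lambda>j. map (\<lambda>k. (\<tau> j k, j)) [1..<j]) [2..<m+1])"

lemma column_ordering_Suc:
  "1 \<le> m \<Longrightarrow> column_ordering \<tau> (Suc m) = column_ordering \<tau> m @ map (\<lambda>k. (k, Suc m)) (map (\<tau> (Suc m)) [1..<Suc m])"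
  unfolding column_ordering_def by simp

lemma column_ordering_Suc_split:
  assumes "1 \<le> m" "map fst rs = column_ordering \<tau> (Suc m)"
  obtains rs1 rs2 where "rs = rs1 @ rs2" "map fst rs1 = column_ordering \<tau> m"
    "map fst rs2 = map (\<lambda>k. (k, Suc m)) (map (\<tau> (Suc m)) [1..<Suc m])"
proof -
  from assms have "map fst rs = column_ordering \<tau> m @ map (\<lambda>k. (k, Suc m)) (map (\<tau> (Suc m)) [1..<Suc m])"
    by (simp add: column_ordering_Suc del: upt_Suc)
  then obtain rs1 rs2 where "rs = rs1 @ rs2" "column_ordering \<tau> m = map fst rs1"
    "map (\<lambda>k. (k, Suc m)) (map (\<tau> (Suc m)) [1..<Suc m]) = map fst rs2"
    unfolding map_eq_append_conv by blast
  then show ?thesis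
    by (intro that) simp_all
qed

lemma set_column_ordering:
  assumes "\<forall>j\<in>{2..m}. bij_betw (\<tau> j) {1..<j} {1..<j}"
  shows "set (column_ordering \<tau> m) \<subseteq> pivot_pairs m"
  using assms by (force simp: column_ordering_def pivot_pairs_def dest: bij_betwE)

(* growth_const nu (Suc m) * sqrt L is the bound of jacobi_run_new_column for c = m and
   B = growth_const nu m * sqrt L. *)
fun growth_const :: "real \<Rightarrow> nat \<Rightarrow> real" where
  "growth_const \<nu> 0 = 0"
| "growth_const \<nu> (Suc m) = 2 ^ m * (1 + m * growth_const \<nu> m) / \<nu> ^ m"

lemma growth_const_nonneg: "0 < \<nu> \<Longrightarrow> 0 \<le> growth_const \<nu> m"
  by (induction m) auto

lemma jacobi_run_column_ordering:
  assumes \<nu>: "0 < \<nu>" "\<nu> \<le> 1" and \<tau>: "\<forall>j\<in>{2..n}. bij_betw (\<tau> j) {1..<j} {1..<j}"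
    and A: "A \<in> carrier_mat n n"
  shows "m \<le> n \<Longrightarrow> map fst rs = column_ordering \<tau> m \<Longrightarrow> \<forall>r\<in>set rs. \<nu> \<le> \<bar>cos (rot_angle r)\<bar> \<Longrightarrow>
    leading_offdiag_le m (jacobi_run n rs A) (growth_const \<nu> m * sqrt (annihilated_sq n rs A))"
proof (induction m arbitrary: rs)
  case (Suc m)
  show ?case
  proof (cases "m = 0")
    case False
    let ?ks = "map (\<tau> (Suc m)) [1..<Suc m]"
    obtain rs1 rs2 where rs: "rs = rs1 @ rs2" and rs1: "map fst rs1 = column_ordering \<tau> m"
      and rs2: "map fst rs2 = map (\<lambda>k. (k, Suc m)) ?ks"
      using column_ordering_Suc_split[of m rs \<tau>] Suc.prems(2) False by auto
    let ?Y = "jacobi_run n rs1 A" and ?L = "annihilated_sq n rs A"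
    have L: "annihilated_sq n rs1 A \<le> ?L" "annihilated_sq n rs2 ?Y \<le> ?L"
      using annihilated_sq_nonneg[of n rs2 ?Y] annihilated_sq_nonneg[of n rs1 A]
      by (simp_all add: rs annihilated_sq_append)
    have "leading_offdiag_le m ?Y (growth_const \<nu> m * sqrt (annihilated_sq n rs1 A))"
      using Suc rs rs1 by simp
    then have B: "leading_offdiag_le m ?Y (growth_const \<nu> m * sqrt ?L)"
      using L(1) growth_const_nonneg[OF \<nu>(1)] by (elim leading_offdiag_le_mono) (simp add: mult_left_mono)
    have "bij_betw (\<tau> (Suc m)) {1..<Suc m} {1..<Suc m}"
      using \<tau> Suc.prems(1) False by auto
    then have "distinct ?ks" "set ?ks = {1..m}"
      by (auto simp: bij_betw_def distinct_map simp del: upt_Suc)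
    moreover have "0 \<le> growth_const \<nu> m * sqrt ?L"
      using growth_const_nonneg[OF \<nu>(1)] annihilated_sq_nonneg by simp
    moreover have "1 \<le> m" "m < n" "\<forall>r\<in>set rs2. \<nu> \<le> \<bar>cos (rot_angle r)\<bar>"
      using False Suc.prems rs by auto
    ultimately have new: "leading_offdiag_le (Suc m) (jacobi_run n rs2 ?Y)
        (2 ^ m * ((sqrt ?L + m * (growth_const \<nu> m * sqrt ?L)) / \<nu> ^ m))"
      using jacobi_run_new_column[OF \<nu> _ _ jacobi_run_carrier[OF A] rs2 _ _ _ _ B L(2)] by blast
    have "2 ^ m * ((sqrt ?L + m * (growth_const \<nu> m * sqrt ?L)) / \<nu> ^ m)
        = growth_const \<nu> (Suc m) * sqrt ?L"
      using \<nu>(1) by (simp add: field_simps)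
    moreover have "jacobi_run n rs A = jacobi_run n rs2 ?Y"
      by (simp add: rs jacobi_run_append)
    ultimately show ?thesis
      using new by (simp only:)
  qed (simp add: leading_offdiag_le_one)
qed (simp add: leading_offdiag_le_one)

lemma off_sq_le_leading_offdiag_le:
  assumes "leading_offdiag_le n A E"
  shows "off_sq n A \<le> real (n * n) * E\<^sup>2"
proof -
  have "off_sq n A \<le> (\<Sum>x\<in>off_pairs n. E\<^sup>2)"
    unfolding off_sq_def using assms
    by (intro sum_mono power_mono) (auto simp: off_pairs_def leading_offdiag_le_def)
  also have "\<dots> \<le> real (n * n) * E\<^sup>2"
  proof -
    have "card (off_pairs n) \<le> card ({..<n} \<times> {..<n})"
      by (intro card_mono) (auto simp: off_pairs_def)
    then have "real (card (off_pairs n)) \<le> real (n * n)"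
      by (simp only: of_nat_le_iff card_cartesian_product card_lessThan)
    from mult_right_mono[OF this zero_le_power2[of E]] show ?thesis
      by simp
  qed
  finally show ?thesis .
qed

section \<open>The contraction bound\<close>

definition contraction_const :: "nat \<Rightarrow> real \<Rightarrow> real" where
  "contraction_const n \<nu> = (let K = real (n * n) * (growth_const \<nu> n)\<^sup>2 in sqrt (K / (1 + K)))"

lemma contraction_const_bounds: "0 \<le> contraction_const n \<nu>" "contraction_const n \<nu> < 1"
proof -
  define K where "K = real (n * n) * (growth_const \<nu> n)\<^sup>2"
  have "0 \<le> K"
    by (simp add: K_def)
  then have "0 \<le> K / (1 + K)" "K / (1 + K) < 1"
    by simp_all
  then show "0 \<le> contraction_const n \<nu>" "contraction_const n \<nu> < 1"
    unfolding contraction_const_def Let_def K_def[symmetric] by simp_all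
qed

lemma off_sq_jacobi_run_contraction:
  assumes \<nu>: "0 < \<nu>" "\<nu> \<le> 1" and \<tau>: "\<forall>j\<in>{2..n}. bij_betw (\<tau> j) {1..<j} {1..<j}"
    and rs: "map fst rs = column_ordering \<tau> n" "\<forall>r\<in>set rs. \<nu> \<le> \<bar>cos (rot_angle r)\<bar>"
    and A: "A \<in> carrier_mat n n"
  shows "off_sq n (jacobi_run n rs A) \<le> (contraction_const n \<nu>)\<^sup>2 * off_sq n A"
proof -
  define K where "K = real (n * n) * (growth_const \<nu> n)\<^sup>2"
  let ?F = "jacobi_run n rs A" and ?L = "annihilated_sq n rs A"
  have "off_sq n ?F \<le> real (n * n) * (growth_const \<nu> n * sqrt ?L)\<^sup>2"
    using jacobi_run_column_ordering[OF \<nu> \<tau> A order.refl rs] by (rule off_sq_le_leading_offdiag_le)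
  also have "\<dots> = K * ?L"
    using annihilated_sq_nonneg[of n rs A] by (simp add: K_def power_mult_distrib)
  finally have "off_sq n ?F \<le> K * ?L" .
  moreover have "fst ` set rs \<subseteq> pivot_pairs n"
    using set_column_ordering[OF \<tau>] arg_cong[OF rs(1), of set] by simp
  then have "off_sq n ?F + ?L = off_sq n A"
    using off_sq_jacobi_run A by blast
  ultimately have "(1 + K) * off_sq n ?F \<le> K * off_sq n A"
    by (simp add: algebra_simps flip: \<open>off_sq n ?F + ?L = off_sq n A\<close>)
  moreover have "0 \<le> K"
    by (simp add: K_def)
  ultimately have "off_sq n ?F \<le> K / (1 + K) * off_sq n A"
    by (simp add: field_simps add_pos_nonneg)
  moreover have "(contraction_const n \<nu>)\<^sup>2 = K / (1 + K)"
    unfolding contraction_const_def Let_def K_def[symmetric] using \<open>0 \<le> K\<close> by simp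
  ultimately show ?thesis
    by simp
qed

lemma spec_norm_jacobi_class:
  assumes \<nu>: "0 < \<nu>" "\<nu> \<le> 1" and ord: "ord \<in> Cc n" and J: "J \<in> jacobi_class n \<nu> ord"
  shows "spec_norm J \<le> contraction_const n \<nu>"
proof -
  let ?\<mu> = "contraction_const n \<nu>"
  obtain \<tau> where \<tau>: "\<forall>j\<in>{2..n}. bij_betw (\<tau> j) {1..<j} {1..<j}" and "ord = column_ordering \<tau> n"
    using ord unfolding Cc_def column_ordering_def by blast
  moreover obtain rs where "map fst rs = ord" "\<forall>r\<in>set rs. \<nu> \<le> \<bar>cos (rot_angle r)\<bar>"
    and J_carrier: "J \<in> carrier_mat (2 * Nn n) (2 * Nn n)"
    and J_run: "\<forall>A\<in>carrier_mat n n. J *\<^sub>v ve n A = ve n (jacobi_run n rs A)"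
    using jacobi_class_run[OF J] by blast
  ultimately have contraction: "off_sq n (jacobi_run n rs A) \<le> ?\<mu>\<^sup>2 * off_sq n A"
    if "A \<in> carrier_mat n n" for A
    using off_sq_jacobi_run_contraction[OF \<nu> \<tau> _ _ that] by simp
  show ?thesis
  proof (rule spec_norm_le[OF contraction_const_bounds(1)])
    fix x :: "complex vec" assume "x \<in> carrier_vec (dim_col J)"
    with J_carrier obtain A where A: "A \<in> carrier_mat n n" and x: "x = ve n A"
      using ve_surj by auto
    have "vnorm2 (J *\<^sub>v x) = sqrt (off_sq n (jacobi_run n rs A))"
      using J_run A x by (simp add: vnorm2_ve)
    also have "\<dots> \<le> sqrt (?\<mu>\<^sup>2 * off_sq n A)"
      using contraction[OF A] by simp
    also have "\<dots> = ?\<mu> * vnorm2 x"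
      using contraction_const_bounds(1) x by (simp add: real_sqrt_mult vnorm2_ve)
    finally show "vnorm2 (J *\<^sub>v x) \<le> ?\<mu> * vnorm2 x" .
  qed
qed

theorem theorem3p2:
  fixes n :: nat and \<nu> :: real
  assumes "n \<ge> 2" and "0 < \<nu>" and "\<nu> \<le> 1"
  shows "\<exists>\<mu>::real. 0 \<le> \<mu> \<and> \<mu> < 1 \<and>
           (\<forall>ord \<in> Cc n. \<forall>J \<in> jacobi_class n \<nu> ord. spec_norm J \<le> \<mu>)"
  using spec_norm_jacobi_class[OF assms(2,3)] contraction_const_bounds by blast

end
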